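(* Let $R$ and $S$ be commutative rings with identity, $f:R\to S$ a ring homomorphism, and $J$ a nonzero proper ideal of $S$. (1) If $J\subseteq\operatorname{Jac}(S)$, then $R\bowtie^f J$ is a pm-ring if and only if $R$ is a pm-ring. (2) For any $R$-module $M$, the trivial extension $R\ltimes M$ is a pm-ring if and only if $R$ is a pm-ring.
   Context: $R\bowtie^f J:=\{(r,f(r)+j)\mid r\in R,\ j\in J\}$, a subring of $R\times S$. $\operatorname{Jac}(S)$ is the Jacobson radical of $S$. The trivial extension $R\ltimes M$ is the ring $R\oplus M$ with multiplication $(r,m)(r',m')=(rr',rm'+r'm)$. A commutative ring is a pm-ring if every prime ideal is contained in a unique maximal ideal. *)

theory Defs
  imports "HOL-Algebra.Algebra"
begin

definition pm_ring :: "('a, 'b) ring_scheme \<Rightarrow> bool" where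
  "pm_ring R \<longleftrightarrow> (\<forall>P. primeideal P R \<longrightarrow> (\<exists>!N. maximalideal N R \<and> P \<subseteq> N))"

definition Jac :: "('a, 'b) ring_scheme \<Rightarrow> 'a set" where
  "Jac S = carrier S \<inter> \<Inter>{N. maximalideal N S}"

definition amalg :: "('a, 'c) ring_scheme \<Rightarrow> ('b, 'd) ring_scheme \<Rightarrow> ('a \<Rightarrow> 'b) \<Rightarrow> 'b set
    \<Rightarrow> ('a \<times> 'b) ring" where
  "amalg R S f J =
    \<lparr> carrier = {(r, f r \<oplus>\<^bsub>S\<^esub> j) | r j. r \<in> carrier R \<and> j \<in> J},
      monoid.mult = (\<lambda>x y. (fst x \<otimes>\<^bsub>R\<^esub> fst y, snd x \<otimes>\<^bsub>S\<^esub> snd y)),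
      monoid.one = (\<one>\<^bsub>R\<^esub>, \<one>\<^bsub>S\<^esub>),
      ring.zero = (\<zero>\<^bsub>R\<^esub>, \<zero>\<^bsub>S\<^esub>),
      ring.add = (\<lambda>x y. (fst x \<oplus>\<^bsub>R\<^esub> fst y, snd x \<oplus>\<^bsub>S\<^esub> snd y)) \<rparr>"

definition triv_ext :: "('a, 'c) ring_scheme \<Rightarrow> ('a, 'b) module \<Rightarrow> ('a \<times> 'b) ring" where
  "triv_ext R M =
    \<lparr> carrier = carrier R \<times> carrier M,
      monoid.mult = (\<lambda>x y. (fst x \<otimes>\<^bsub>R\<^esub> fst y,
                     (fst x \<odot>\<^bsub>M\<^esub> snd y) \<oplus>\<^bsub>M\<^esub> (fst y \<odot>\<^bsub>M\<^esub> snd x))),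
      monoid.one = (\<one>\<^bsub>R\<^esub>, \<zero>\<^bsub>M\<^esub>),
      ring.zero = (\<zero>\<^bsub>R\<^esub>, \<zero>\<^bsub>M\<^esub>),
      ring.add = (\<lambda>x y. (fst x \<oplus>\<^bsub>R\<^esub> fst y, snd x \<oplus>\<^bsub>M\<^esub> snd y)) \<rparr>"

end

theory Submission
  imports Defs
begin

text \<open>Both rings retract onto \<open>R\<close>: the first projection \<open>h\<close> is a ring homomorphism with
section \<open>r \<mapsto> (r, f r)\<close>, resp. \<open>r \<mapsto> (r, 0)\<close>, and every element lying over \<open>1\<close> is a unit
(for the amalgamation because \<open>1 + J\<close> consists of units when \<open>J \<subseteq> Jac S\<close>, for the trivial
extension because \<open>(1, m) (1, -m) = 1\<close>). For such a retraction the image of a proper ideal is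
proper, so every maximal ideal is the preimage of a maximal ideal of \<open>R\<close>, and \<open>m \<mapsto> h\<^sup>-\<^sup>1(m)\<close>
is a bijection between maximal ideals. Primes pull back along \<open>h\<close> and along the section, which
transfers the pm property in both directions.\<close>

lemma (in ring) exists_maximalideal:
  assumes "ideal I R" and "I \<noteq> carrier R"
  shows "\<exists>M. maximalideal M R \<and> I \<subseteq> M"
proof -
  define \<A> where "\<A> = {J. ideal J R \<and> I \<subseteq> J \<and> \<one> \<notin> J}"
  have "I \<in> \<A>"
    using assms ideal.one_imp_carrier unfolding \<A>_def by blast
  moreover have "\<Union>\<C> \<in> \<A>" if "\<C> \<noteq> {}" and "subset.chain \<A> \<C>" for \<C>
  proof -
    have "subset.chain {J. ideal J R} \<C>"
      using that(2) unfolding \<A>_def pred_on.chain_def by blast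
    from chain_Union_is_ideal[OF this] have "ideal (\<Union>\<C>) R"
      using that(1) by simp
    then show ?thesis
      using that unfolding \<A>_def pred_on.chain_def by blast
  qed
  ultimately obtain M where M: "M \<in> \<A>" and M_max: "\<And>J. J \<in> \<A> \<Longrightarrow> M \<subseteq> J \<Longrightarrow> J = M"
    using subset_Zorn_nonempty[of \<A>] by blast
  have "maximalideal M R"
  proof (rule maximalidealI)
    show "ideal M R" and "carrier R \<noteq> M"
      using M unfolding \<A>_def by auto
    fix J assume "ideal J R" "M \<subseteq> J" "J \<subseteq> carrier R"
    then show "J = M \<or> J = carrier R"
      using M M_max ideal.one_imp_carrier unfolding \<A>_def by blast
  qed
  then show ?thesis
    using M unfolding \<A>_def by blast
qed

lemma (in ideal) Units_imp_carrier:
  assumes "x \<in> I" and "x \<in> Units R"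
  shows "I = carrier R"
proof -
  have "x \<otimes> inv x \<in> I"
    using I_r_closed[OF assms(1) Units_inv_closed[OF assms(2)]] .
  then show ?thesis
    using assms(2) one_imp_carrier by simp
qed

lemma (in cring) one_plus_Jac_Units:
  assumes "j \<in> Jac R"
  shows "\<one> \<oplus> j \<in> Units R"
proof (rule ccontr)
  assume not_unit: "\<one> \<oplus> j \<notin> Units R"
  have j: "j \<in> carrier R"
    using assms by (simp add: Jac_def)
  then have one_j: "\<one> \<oplus> j \<in> carrier R"
    by simp
  have "PIdl (\<one> \<oplus> j) \<noteq> carrier R"
    using ideal_eq_carrier_iff[OF one_j] not_unit by blast
  then obtain M where M: "maximalideal M R" and sub: "PIdl (\<one> \<oplus> j) \<subseteq> M"
    using exists_maximalideal[OF cgenideal_ideal[OF one_j]] by blast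
  interpret M: maximalideal M R by (rule M)
  have "\<one> \<oplus> j \<in> M"
    using sub cgenideal_self[OF one_j] by blast
  moreover have "j \<in> M"
    using assms M unfolding Jac_def by blast
  ultimately have "(\<one> \<oplus> j) \<ominus> j \<in> M"
    by (simp add: minus_eq M.a_inv_closed)
  moreover have "(\<one> \<oplus> j) \<ominus> j = \<one>"
    using j by (simp add: minus_eq a_assoc r_neg)
  ultimately show False
    using M.one_imp_carrier M.I_notcarr by simp
qed

lemma (in ring_hom_ring) ideal_image:
  assumes I: "ideal I R" and surj: "h ` carrier R = carrier S"
  shows "ideal (h ` I) S"
proof (rule idealI[OF S.ring_axioms])
  interpret I: ideal I R by (rule I)
  show "subgroup (h ` I) (add_monoid S)"
  proof (rule S.add.subgroupI)
    show "h ` I \<subseteq> carrier S"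
      using I.a_subset by auto
    show "h ` I \<noteq> {}"
      using additive_subgroup.zero_closed[OF ideal.axioms(1)[OF I]] by blast
    show "\<ominus>\<^bsub>S\<^esub> y \<in> h ` I" if y: "y \<in> h ` I" for y
    proof -
      obtain x where "x \<in> I" "y = h x"
        using y by blast
      then show ?thesis
        using I.Icarr I.a_inv_closed by (intro image_eqI[of _ h "\<ominus> x"]) auto
    qed
    show "y \<oplus>\<^bsub>S\<^esub> y' \<in> h ` I" if y: "y \<in> h ` I" "y' \<in> h ` I" for y y'
    proof -
      obtain x x' where "x \<in> I" "y = h x" "x' \<in> I" "y' = h x'"
        using y by blast
      then show ?thesis
        using I.Icarr I.a_closed by (intro image_eqI[of _ h "x \<oplus> x'"]) auto
    qed
  qed
  fix y z assume "y \<in> h ` I" and "z \<in> carrier S"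
  moreover have "z \<in> h ` carrier R"
    using surj \<open>z \<in> carrier S\<close> by simp
  ultimately obtain x x' where x: "x \<in> I" "y = h x" and x': "x' \<in> carrier R" "z = h x'"
    by blast
  show "z \<otimes>\<^bsub>S\<^esub> y \<in> h ` I"
    using x x' I.Icarr I.I_l_closed by (intro image_eqI[of _ h "x' \<otimes> x"]) auto
  show "y \<otimes>\<^bsub>S\<^esub> z \<in> h ` I"
    using x x' I.Icarr I.I_r_closed by (intro image_eqI[of _ h "x \<otimes> x'"]) auto
qed

text \<open>\<open>Units_lift\<close> says that the kernel of \<open>h\<close> lies in the Jacobson radical of \<open>R\<close>.\<close>

locale unit_lifting_retraction = ring_hom_cring R S h for R (structure) and S (structure) and h +
  fixes s
  assumes section_hom: "s \<in> ring_hom S R"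
    and h_section: "y \<in> carrier S \<Longrightarrow> h (s y) = y"
    and Units_lift: "\<lbrakk>x \<in> carrier R; h x = \<one>\<^bsub>S\<^esub>\<rbrakk> \<Longrightarrow> x \<in> Units R"
begin

abbreviation pullback :: "'c set \<Rightarrow> 'a set"
  where "pullback m \<equiv> {x \<in> carrier R. h x \<in> m}"

lemma image_pullback:
  assumes "m \<subseteq> carrier S"
  shows "h ` pullback m = m"
proof
  show "m \<subseteq> h ` pullback m"
  proof
    fix y assume y: "y \<in> m"
    then have "y \<in> carrier S"
      using assms by blast
    then have "s y \<in> pullback m" and "h (s y) = y"
      using y h_section ring_hom_closed[OF section_hom] by auto
    then show "y \<in> h ` pullback m"
      by (metis rev_image_eqI)
  qed
qed blast

lemma h_surj: "h ` carrier R = carrier S"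
proof -
  have "pullback (carrier S) = carrier R"
    by auto
  then show ?thesis
    using image_pullback[of "carrier S"] by simp
qed

lemma image_ideal_proper:
  assumes I: "ideal I R" and "I \<noteq> carrier R"
  shows "h ` I \<noteq> carrier S"
proof
  assume "h ` I = carrier S"
  then have "\<one>\<^bsub>S\<^esub> \<in> h ` I"
    by simp
  then obtain x where x: "x \<in> I" "h x = \<one>\<^bsub>S\<^esub>"
    by auto
  then have "x \<in> Units R"
    using Units_lift ideal.Icarr[OF I] by blast
  then show False
    using ideal.Units_imp_carrier[OF I x(1)] assms(2) by blast
qed

lemma maximalideal_pullback:
  assumes m: "maximalideal m S"
  shows "maximalideal (pullback m) R"
proof (rule maximalidealI)
  interpret m: maximalideal m S by (rule m)
  show "ideal (pullback m) R"
    by (rule ring.ideal_vimage[OF m.is_ideal])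
  show "carrier R \<noteq> pullback m"
  proof
    assume "carrier R = pullback m"
    then have "\<one> \<in> pullback m"
      using R.one_closed by blast
    then have "\<one>\<^bsub>S\<^esub> \<in> m"
      by simp
    then show False
      using m.one_imp_carrier m.I_notcarr by simp
  qed
  fix I assume I: "ideal I R" "pullback m \<subseteq> I" "I \<subseteq> carrier R"
  have "ideal (h ` I) S"
    by (rule ring.ideal_image[OF I(1) h_surj])
  moreover have "m \<subseteq> h ` I"
    using image_mono[OF I(2), of h] image_pullback[OF m.a_subset] by simp
  moreover have "h ` I \<subseteq> carrier S"
    using I(3) by auto
  ultimately have "h ` I = m \<or> h ` I = carrier S"
    by (rule m.I_maximal)
  moreover have "h ` I = m \<Longrightarrow> I \<subseteq> pullback m"
    using I(3) by auto
  ultimately show "I = pullback m \<or> I = carrier R"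
    using I(1,2) image_ideal_proper[OF I(1)] by blast
qed

lemma maximalideal_is_pullback:
  assumes N: "maximalideal N R"
  obtains m where "maximalideal m S" and "N = pullback m"
proof -
  interpret N: maximalideal N R by (rule N)
  have "ideal (h ` N) S"
    by (rule ring.ideal_image[OF N.is_ideal h_surj])
  moreover have "h ` N \<noteq> carrier S"
    by (rule image_ideal_proper[OF N.is_ideal N.I_notcarr[symmetric]])
  ultimately obtain m where m: "maximalideal m S" "h ` N \<subseteq> m"
    using S.exists_maximalideal by blast
  interpret m: maximalideal m S by (rule m(1))
  have "N \<subseteq> pullback m"
    using m(2) N.a_subset by blast
  then have "pullback m = N \<or> pullback m = carrier R"
    using N.I_maximal[OF ring.ideal_vimage[OF m.is_ideal]] by blast
  moreover have "pullback m \<noteq> carrier R"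
    using maximalideal.I_notcarr[OF maximalideal_pullback[OF m(1)]] by simp
  ultimately show ?thesis
    using m(1) that by blast
qed

lemma pm_ring_reflect:
  assumes "pm_ring R"
  shows "pm_ring S"
  unfolding pm_ring_def
proof (intro allI impI)
  fix q assume q: "primeideal q S"
  interpret q: primeideal q S by (rule q)
  have "primeideal (pullback q) R"
    by (rule ring.primeideal_vimage[OF R.is_cring q])
  then have "\<exists>!N. maximalideal N R \<and> pullback q \<subseteq> N"
    using assms unfolding pm_ring_def by blast
  then obtain N where N: "maximalideal N R" "pullback q \<subseteq> N"
    and N_unique: "\<And>N'. maximalideal N' R \<Longrightarrow> pullback q \<subseteq> N' \<Longrightarrow> N' = N"
    by blast
  obtain m where m: "maximalideal m S" "N = pullback m"
    using maximalideal_is_pullback[OF N(1)] by blast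
  interpret m: maximalideal m S by (rule m(1))
  have "q = h ` pullback q"
    using image_pullback[OF q.a_subset] by simp
  also have "\<dots> \<subseteq> h ` pullback m"
    using N(2) m(2) by (intro image_mono) simp
  also have "\<dots> = m"
    using image_pullback[OF m.a_subset] .
  finally have "q \<subseteq> m" .
  moreover have "m' = m" if m': "maximalideal m' S" "q \<subseteq> m'" for m'
  proof -
    have "pullback q \<subseteq> pullback m'"
      using m'(2) by auto
    then have "pullback m' = pullback m"
      using N_unique[OF maximalideal_pullback[OF m'(1)]] m(2) by simp
    then have "h ` pullback m' = h ` pullback m"
      by simp
    then show ?thesis
      using image_pullback[OF additive_subgroup.a_subset[OF ideal.axioms(1)[OF maximalideal.axioms(1)[OF m'(1)]]]] image_pullback[OF m.a_subset]
      by simp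
  qed
  ultimately show "\<exists>!m. maximalideal m S \<and> q \<subseteq> m"
    using m(1) by blast
qed

lemma pm_ring_lift:
  assumes "pm_ring S"
  shows "pm_ring R"
  unfolding pm_ring_def
proof (intro allI impI)
  fix P assume P: "primeideal P R"
  interpret P: primeideal P R by (rule P)
  define q where "q = {y \<in> carrier S. s y \<in> P}"
  have "primeideal q S"
    unfolding q_def
    by (rule ring_hom_ring.primeideal_vimage[OF _ S.is_cring P])
      (rule ring_hom_ringI2[OF S.ring_axioms R.ring_axioms section_hom])
  then have q_unique: "m1 = m2"
    if "maximalideal m1 S" "q \<subseteq> m1" "maximalideal m2 S" "q \<subseteq> m2" for m1 m2
    using assms that unfolding pm_ring_def by blast
  have q_below: "q \<subseteq> m" if "P \<subseteq> pullback m" for m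
    using that h_section unfolding q_def by auto
  have "N1 = N2"
    if N1: "maximalideal N1 R" "P \<subseteq> N1" and N2: "maximalideal N2 R" "P \<subseteq> N2" for N1 N2
  proof -
    obtain m1 where m1: "maximalideal m1 S" "N1 = pullback m1"
      using maximalideal_is_pullback[OF N1(1)] by blast
    obtain m2 where m2: "maximalideal m2 S" "N2 = pullback m2"
      using maximalideal_is_pullback[OF N2(1)] by blast
    have "m1 = m2"
      using q_unique[OF m1(1) q_below m2(1) q_below] N1(2) N2(2) m1(2) m2(2) by simp
    then show ?thesis
      using m1(2) m2(2) by simp
  qed
  moreover obtain N where "maximalideal N R" "P \<subseteq> N"
    using R.exists_maximalideal[OF P.is_ideal P.I_notcarr[symmetric]] by blast
  ultimately show "\<exists>!N. maximalideal N R \<and> P \<subseteq> N"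
    by blast
qed

theorem pm_ring_iff: "pm_ring R \<longleftrightarrow> pm_ring S"
  using pm_ring_reflect pm_ring_lift by blast

end

lemma amalg_simps:
  "carrier (amalg R S f J) = {(r, f r \<oplus>\<^bsub>S\<^esub> j) | r j. r \<in> carrier R \<and> j \<in> J}"
  "x \<otimes>\<^bsub>amalg R S f J\<^esub> y = (fst x \<otimes>\<^bsub>R\<^esub> fst y, snd x \<otimes>\<^bsub>S\<^esub> snd y)"
  "x \<oplus>\<^bsub>amalg R S f J\<^esub> y = (fst x \<oplus>\<^bsub>R\<^esub> fst y, snd x \<oplus>\<^bsub>S\<^esub> snd y)"
  "\<one>\<^bsub>amalg R S f J\<^esub> = (\<one>\<^bsub>R\<^esub>, \<one>\<^bsub>S\<^esub>)"
  by (simp_all add: amalg_def)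

lemma amalg_eq_RDirProd: "amalg R S f J = (RDirProd R S)\<lparr>carrier := carrier (amalg R S f J)\<rparr>"
  by (simp add: amalg_def RDirProd_def DirProd_def monoid.defs fun_eq_iff split_beta)

lemma RDirProd_simps:
  "(a, b) \<otimes>\<^bsub>RDirProd R S\<^esub> (c, d) = (a \<otimes>\<^bsub>R\<^esub> c, b \<otimes>\<^bsub>S\<^esub> d)"
  "(a, b) \<oplus>\<^bsub>RDirProd R S\<^esub> (c, d) = (a \<oplus>\<^bsub>R\<^esub> c, b \<oplus>\<^bsub>S\<^esub> d)"
  "\<one>\<^bsub>RDirProd R S\<^esub> = (\<one>\<^bsub>R\<^esub>, \<one>\<^bsub>S\<^esub>)"
  by (simp_all add: RDirProd_def DirProd_def monoid.defs)

lemma RDirProd_a_inv: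
  assumes "ring R" "ring S" "a \<in> carrier R" "b \<in> carrier S"
  shows "\<ominus>\<^bsub>RDirProd R S\<^esub> (a, b) = (\<ominus>\<^bsub>R\<^esub> a, \<ominus>\<^bsub>S\<^esub> b)"
  unfolding a_inv_def RDirProd_add_monoid
  using assms by (simp add: ring.is_abelian_group abelian_group.a_group)

lemma (in ring_hom_cring) subring_amalg:
  assumes J: "ideal J S"
  shows "subring (carrier (amalg R S h J)) (RDirProd R S)"
proof -
  interpret J: ideal J S by (rule J)
  interpret P: ring "RDirProd R S" by (rule RDirProd_ring[OF R.ring_axioms S.ring_axioms])
  define H where "H = {(r, h r \<oplus>\<^bsub>S\<^esub> j) | r j. r \<in> carrier R \<and> j \<in> J}"
  have "subring H (RDirProd R S)"
  proof (rule P.subringI)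
    show "H \<subseteq> carrier (RDirProd R S)"
      using J.Icarr unfolding H_def by (auto simp: RDirProd_carrier)
    have "\<one>\<^bsub>RDirProd R S\<^esub> = (\<one>, h \<one> \<oplus>\<^bsub>S\<^esub> \<zero>\<^bsub>S\<^esub>)"
      by (simp add: RDirProd_simps)
    then show "\<one>\<^bsub>RDirProd R S\<^esub> \<in> H"
      unfolding H_def using J.zero_closed by blast
  next
    fix x assume "x \<in> H"
    then obtain r j where x: "x = (r, h r \<oplus>\<^bsub>S\<^esub> j)" "r \<in> carrier R" "j \<in> J"
      unfolding H_def by blast
    have "\<ominus>\<^bsub>S\<^esub> (h r \<oplus>\<^bsub>S\<^esub> j) = h (\<ominus> r) \<oplus>\<^bsub>S\<^esub> \<ominus>\<^bsub>S\<^esub> j"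
      using x(2,3) J.Icarr by (simp add: S.minus_add)
    then have "\<ominus>\<^bsub>RDirProd R S\<^esub> x = (\<ominus> r, h (\<ominus> r) \<oplus>\<^bsub>S\<^esub> \<ominus>\<^bsub>S\<^esub> j)"
      using x J.Icarr by (simp add: RDirProd_a_inv[OF R.ring_axioms S.ring_axioms])
    then show "\<ominus>\<^bsub>RDirProd R S\<^esub> x \<in> H"
      unfolding H_def using x(2,3) J.a_inv_closed by blast
  next
    fix x y assume "x \<in> H" "y \<in> H"
    then obtain r j r' j' where x: "x = (r, h r \<oplus>\<^bsub>S\<^esub> j)" "r \<in> carrier R" "j \<in> J"
      and y: "y = (r', h r' \<oplus>\<^bsub>S\<^esub> j')" "r' \<in> carrier R" "j' \<in> J"
      unfolding H_def by blast
    have carr: "j \<in> carrier S" "j' \<in> carrier S" "h r \<in> carrier S" "h r' \<in> carrier S"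
      using x(2,3) y(2,3) J.Icarr by auto
    have "(h r \<oplus>\<^bsub>S\<^esub> j) \<otimes>\<^bsub>S\<^esub> (h r' \<oplus>\<^bsub>S\<^esub> j')
        = h r \<otimes>\<^bsub>S\<^esub> h r' \<oplus>\<^bsub>S\<^esub> (h r \<otimes>\<^bsub>S\<^esub> j' \<oplus>\<^bsub>S\<^esub> j \<otimes>\<^bsub>S\<^esub> (h r' \<oplus>\<^bsub>S\<^esub> j'))"
      using carr by algebra
    moreover have "h r \<otimes>\<^bsub>S\<^esub> j' \<oplus>\<^bsub>S\<^esub> j \<otimes>\<^bsub>S\<^esub> (h r' \<oplus>\<^bsub>S\<^esub> j') \<in> J"
      using x(3) y(3) carr J.I_l_closed J.I_r_closed J.a_closed by simp
    ultimately show "x \<otimes>\<^bsub>RDirProd R S\<^esub> y \<in> H"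
      unfolding H_def using x y by (auto simp: RDirProd_simps)
    have "(h r \<oplus>\<^bsub>S\<^esub> j) \<oplus>\<^bsub>S\<^esub> (h r' \<oplus>\<^bsub>S\<^esub> j') = h r \<oplus>\<^bsub>S\<^esub> h r' \<oplus>\<^bsub>S\<^esub> (j \<oplus>\<^bsub>S\<^esub> j')"
      using carr by algebra
    then show "x \<oplus>\<^bsub>RDirProd R S\<^esub> y \<in> H"
      unfolding H_def using x y J.a_closed by (auto simp: RDirProd_simps)
  qed
  then show ?thesis
    unfolding H_def amalg_simps .
qed

lemma (in ring_hom_cring) cring_amalg:
  assumes "ideal J S"
  shows "cring (amalg R S h J)"
proof -
  interpret P: ring "RDirProd R S" by (rule RDirProd_ring[OF R.ring_axioms S.ring_axioms])
  have sub: "subring (carrier (amalg R S h J)) (RDirProd R S)"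
    by (rule subring_amalg[OF assms])
  have "subcring (carrier (amalg R S h J)) (RDirProd R S)"
  proof (rule P.subcringI[OF sub])
    fix x y assume "x \<in> carrier (amalg R S h J)" "y \<in> carrier (amalg R S h J)"
    then have "x \<in> carrier R \<times> carrier S" "y \<in> carrier R \<times> carrier S"
      using subringE(1)[OF sub] by (auto simp: RDirProd_carrier)
    then show "x \<otimes>\<^bsub>RDirProd R S\<^esub> y = y \<otimes>\<^bsub>RDirProd R S\<^esub> x"
      by (cases x, cases y) (simp add: RDirProd_simps R.m_comm S.m_comm)
  qed
  then have "cring ((RDirProd R S)\<lparr>carrier := carrier (amalg R S h J)\<rparr>)"
    using P.subcring_iff subringE(1)[OF sub] by blast
  then show ?thesis
    by (subst amalg_eq_RDirProd)
qed

lemma (in ring_hom_cring) unit_lifting_retraction_amalg: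
  assumes J: "ideal J S" and J_Jac: "J \<subseteq> Jac S"
  shows "unit_lifting_retraction (amalg R S h J) R fst (\<lambda>r. (r, h r))"
proof -
  interpret J: ideal J S by (rule J)
  have graph_mem: "(r, h r) \<in> carrier (amalg R S h J)" if "r \<in> carrier R" for r
  proof -
    have "(r, h r) = (r, h r \<oplus>\<^bsub>S\<^esub> \<zero>\<^bsub>S\<^esub>)"
      using that by simp
    then show ?thesis
      using that J.zero_closed unfolding amalg_simps by blast
  qed
  have "fst \<in> ring_hom (amalg R S h J) R"
    by (rule ring_hom_memI) (auto simp: amalg_simps)
  moreover have "(\<lambda>r. (r, h r)) \<in> ring_hom R (amalg R S h J)"
    by (rule ring_hom_memI[OF graph_mem]) (simp_all add: amalg_simps)
  moreover have "x \<in> Units (amalg R S h J)"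
    if x: "x \<in> carrier (amalg R S h J)" "fst x = \<one>" for x
  proof -
    obtain j where j: "x = (\<one>, \<one>\<^bsub>S\<^esub> \<oplus>\<^bsub>S\<^esub> j)" "j \<in> J"
      using x unfolding amalg_simps by auto
    have j_carr: "j \<in> carrier S"
      using j(2) J.Icarr by blast
    have unit: "\<one>\<^bsub>S\<^esub> \<oplus>\<^bsub>S\<^esub> j \<in> Units S"
      using S.one_plus_Jac_Units j(2) J_Jac by blast
    define u where "u = inv\<^bsub>S\<^esub> (\<one>\<^bsub>S\<^esub> \<oplus>\<^bsub>S\<^esub> j)"
    have u: "u \<in> carrier S" "(\<one>\<^bsub>S\<^esub> \<oplus>\<^bsub>S\<^esub> j) \<otimes>\<^bsub>S\<^esub> u = \<one>\<^bsub>S\<^esub>" "u \<otimes>\<^bsub>S\<^esub> (\<one>\<^bsub>S\<^esub> \<oplus>\<^bsub>S\<^esub> j) = \<one>\<^bsub>S\<^esub>"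
      using unit unfolding u_def by simp_all
    have "u = (\<one>\<^bsub>S\<^esub> \<oplus>\<^bsub>S\<^esub> j) \<otimes>\<^bsub>S\<^esub> u \<oplus>\<^bsub>S\<^esub> \<ominus>\<^bsub>S\<^esub> (j \<otimes>\<^bsub>S\<^esub> u)"
      using u(1) j_carr by algebra
    then have "u = h \<one> \<oplus>\<^bsub>S\<^esub> \<ominus>\<^bsub>S\<^esub> (j \<otimes>\<^bsub>S\<^esub> u)"
      using u(2) by simp
    moreover have "\<ominus>\<^bsub>S\<^esub> (j \<otimes>\<^bsub>S\<^esub> u) \<in> J"
      using j(2) u(1) J.I_r_closed J.a_inv_closed by simp
    ultimately have "(\<one>, u) \<in> carrier (amalg R S h J)"
      unfolding amalg_simps by blast
    moreover have "x \<otimes>\<^bsub>amalg R S h J\<^esub> (\<one>, u) = \<one>\<^bsub>amalg R S h J\<^esub>"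
      and "(\<one>, u) \<otimes>\<^bsub>amalg R S h J\<^esub> x = \<one>\<^bsub>amalg R S h J\<^esub>"
      using u(2,3) j(1) by (simp_all add: amalg_simps)
    ultimately show ?thesis
      using x(1) unfolding Units_def by blast
  qed
  ultimately show ?thesis
    by (intro unit_lifting_retraction.intro unit_lifting_retraction_axioms.intro
        ring_hom_cring.intro ring_hom_cring_axioms.intro cring_amalg J R.is_cring) auto
qed

lemma triv_ext_simps:
  "carrier (triv_ext R M) = carrier R \<times> carrier M"
  "x \<otimes>\<^bsub>triv_ext R M\<^esub> y = (fst x \<otimes>\<^bsub>R\<^esub> fst y, (fst x \<odot>\<^bsub>M\<^esub> snd y) \<oplus>\<^bsub>M\<^esub> (fst y \<odot>\<^bsub>M\<^esub> snd x))"
  "x \<oplus>\<^bsub>triv_ext R M\<^esub> y = (fst x \<oplus>\<^bsub>R\<^esub> fst y, snd x \<oplus>\<^bsub>M\<^esub> snd y)"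
  "\<one>\<^bsub>triv_ext R M\<^esub> = (\<one>\<^bsub>R\<^esub>, \<zero>\<^bsub>M\<^esub>)"
  "\<zero>\<^bsub>triv_ext R M\<^esub> = (\<zero>\<^bsub>R\<^esub>, \<zero>\<^bsub>M\<^esub>)"
  by (simp_all add: triv_ext_def)

text \<open>An unnamed context instead of the locale \<open>module\<close>, whose module parameter is an
extensible record, while \<open>triv_ext\<close> accepts only plain modules.\<close>

context
  fixes R :: "('a, 'c) ring_scheme" (structure) and M :: "('a, 'b) module"
  assumes module: "module R M"
begin

interpretation module R M
  by (rule module)

lemma triv_ext_m_assoc:
  assumes "x \<in> carrier (triv_ext R M)" "y \<in> carrier (triv_ext R M)" "z \<in> carrier (triv_ext R M)"
  shows "x \<otimes>\<^bsub>triv_ext R M\<^esub> y \<otimes>\<^bsub>triv_ext R M\<^esub> z = x \<otimes>\<^bsub>triv_ext R M\<^esub> (y \<otimes>\<^bsub>triv_ext R M\<^esub> z)"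
proof -
  obtain a m b n c q where xyz: "x = (a, m)" "y = (b, n)" "z = (c, q)"
    by (cases x, cases y, cases z) blast
  have carr: "a \<in> carrier R" "b \<in> carrier R" "c \<in> carrier R"
    "m \<in> carrier M" "n \<in> carrier M" "q \<in> carrier M"
    using assms unfolding xyz triv_ext_simps by auto
  have "(a \<otimes> b) \<odot>\<^bsub>M\<^esub> q \<oplus>\<^bsub>M\<^esub> c \<odot>\<^bsub>M\<^esub> (a \<odot>\<^bsub>M\<^esub> n \<oplus>\<^bsub>M\<^esub> b \<odot>\<^bsub>M\<^esub> m)
      = (a \<otimes> b) \<odot>\<^bsub>M\<^esub> q \<oplus>\<^bsub>M\<^esub> ((a \<otimes> c) \<odot>\<^bsub>M\<^esub> n \<oplus>\<^bsub>M\<^esub> (b \<otimes> c) \<odot>\<^bsub>M\<^esub> m)"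
    using carr by (simp add: smult_r_distr smult_assoc1[symmetric] R.m_comm[of c])
  also have "\<dots> = a \<odot>\<^bsub>M\<^esub> (b \<odot>\<^bsub>M\<^esub> q \<oplus>\<^bsub>M\<^esub> c \<odot>\<^bsub>M\<^esub> n) \<oplus>\<^bsub>M\<^esub> (b \<otimes> c) \<odot>\<^bsub>M\<^esub> m"
    using carr by (simp add: smult_r_distr smult_assoc1 M.a_assoc)
  finally show ?thesis
    unfolding xyz triv_ext_simps using carr by (simp add: R.m_assoc)
qed

lemma cring_triv_ext: "cring (triv_ext R M)"
proof (rule cringI)
  show "abelian_group (triv_ext R M)"
  proof (rule abelian_groupI)
    fix x y z assume "x \<in> carrier (triv_ext R M)" "y \<in> carrier (triv_ext R M)"
      "z \<in> carrier (triv_ext R M)"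
    then show "x \<oplus>\<^bsub>triv_ext R M\<^esub> y \<in> carrier (triv_ext R M)"
      and "x \<oplus>\<^bsub>triv_ext R M\<^esub> y = y \<oplus>\<^bsub>triv_ext R M\<^esub> x"
      by (auto simp: triv_ext_simps mem_Times_iff R.a_comm M.a_comm)
    show "x \<oplus>\<^bsub>triv_ext R M\<^esub> y \<oplus>\<^bsub>triv_ext R M\<^esub> z
        = x \<oplus>\<^bsub>triv_ext R M\<^esub> (y \<oplus>\<^bsub>triv_ext R M\<^esub> z)"
      using \<open>x \<in> _\<close> \<open>y \<in> _\<close> \<open>z \<in> _\<close>
      by (auto simp: triv_ext_simps mem_Times_iff R.a_assoc M.a_assoc)
  next
    fix x assume x: "x \<in> carrier (triv_ext R M)"
    then show "\<zero>\<^bsub>triv_ext R M\<^esub> \<oplus>\<^bsub>triv_ext R M\<^esub> x = x"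
      by (auto simp: triv_ext_simps)
    have "(\<ominus> fst x, \<ominus>\<^bsub>M\<^esub> snd x) \<in> carrier (triv_ext R M)"
      and "(\<ominus> fst x, \<ominus>\<^bsub>M\<^esub> snd x) \<oplus>\<^bsub>triv_ext R M\<^esub> x = \<zero>\<^bsub>triv_ext R M\<^esub>"
      using x by (auto simp: triv_ext_simps mem_Times_iff R.l_neg M.l_neg)
    then show "\<exists>y\<in>carrier (triv_ext R M). y \<oplus>\<^bsub>triv_ext R M\<^esub> x = \<zero>\<^bsub>triv_ext R M\<^esub>"
      by blast
  qed (simp add: triv_ext_simps)
  show "comm_monoid (triv_ext R M)"
  proof (rule comm_monoidI)
    fix x y assume "x \<in> carrier (triv_ext R M)" "y \<in> carrier (triv_ext R M)"
    then show "x \<otimes>\<^bsub>triv_ext R M\<^esub> y \<in> carrier (triv_ext R M)"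
      and "x \<otimes>\<^bsub>triv_ext R M\<^esub> y = y \<otimes>\<^bsub>triv_ext R M\<^esub> x"
      by (auto simp: triv_ext_simps mem_Times_iff R.m_comm M.a_comm)
  next
    fix x assume "x \<in> carrier (triv_ext R M)"
    then show "\<one>\<^bsub>triv_ext R M\<^esub> \<otimes>\<^bsub>triv_ext R M\<^esub> x = x"
      by (auto simp: triv_ext_simps)
  next
    fix x y z assume "x \<in> carrier (triv_ext R M)" "y \<in> carrier (triv_ext R M)"
      "z \<in> carrier (triv_ext R M)"
    then show "x \<otimes>\<^bsub>triv_ext R M\<^esub> y \<otimes>\<^bsub>triv_ext R M\<^esub> z
        = x \<otimes>\<^bsub>triv_ext R M\<^esub> (y \<otimes>\<^bsub>triv_ext R M\<^esub> z)"
      by (rule triv_ext_m_assoc)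
  qed (simp add: triv_ext_simps)
  fix x y z assume "x \<in> carrier (triv_ext R M)" "y \<in> carrier (triv_ext R M)"
    "z \<in> carrier (triv_ext R M)"
  then show "(x \<oplus>\<^bsub>triv_ext R M\<^esub> y) \<otimes>\<^bsub>triv_ext R M\<^esub> z
      = x \<otimes>\<^bsub>triv_ext R M\<^esub> z \<oplus>\<^bsub>triv_ext R M\<^esub> y \<otimes>\<^bsub>triv_ext R M\<^esub> z"
    by (auto simp: triv_ext_simps R.l_distr smult_l_distr smult_r_distr M.a_ac)
qed

lemma unit_lifting_retraction_triv_ext:
  "unit_lifting_retraction (triv_ext R M) R fst (\<lambda>r. (r, \<zero>\<^bsub>M\<^esub>))"
proof -
  have "fst \<in> ring_hom (triv_ext R M) R"
    by (rule ring_hom_memI) (auto simp: triv_ext_simps)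
  moreover have "(\<lambda>r. (r, \<zero>\<^bsub>M\<^esub>)) \<in> ring_hom R (triv_ext R M)"
    by (rule ring_hom_memI) (simp_all add: triv_ext_simps)
  moreover have "x \<in> Units (triv_ext R M)"
    if x: "x \<in> carrier (triv_ext R M)" "fst x = \<one>" for x
  proof -
    have "(\<one>, \<ominus>\<^bsub>M\<^esub> snd x) \<in> carrier (triv_ext R M)"
      and "x \<otimes>\<^bsub>triv_ext R M\<^esub> (\<one>, \<ominus>\<^bsub>M\<^esub> snd x) = \<one>\<^bsub>triv_ext R M\<^esub>"
      and "(\<one>, \<ominus>\<^bsub>M\<^esub> snd x) \<otimes>\<^bsub>triv_ext R M\<^esub> x = \<one>\<^bsub>triv_ext R M\<^esub>"
      using x by (auto simp: triv_ext_simps M.l_neg M.r_neg)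
    then show ?thesis
      using x(1) unfolding Units_def by blast
  qed
  ultimately show ?thesis
    by (intro unit_lifting_retraction.intro unit_lifting_retraction_axioms.intro
        ring_hom_cring.intro ring_hom_cring_axioms.intro cring_triv_ext R.is_cring) auto
qed

end

theorem corollary3p6:
  fixes R :: "'a ring" and S :: "'b ring" and f :: "'a \<Rightarrow> 'b" and J :: "'b set"
  assumes "cring R" and "cring S" and "f \<in> ring_hom R S"
  shows "(ideal J S \<and> J \<noteq> {\<zero>\<^bsub>S\<^esub>} \<and> J \<noteq> carrier S \<and> J \<subseteq> Jac S \<longrightarrow>
            (pm_ring (amalg R S f J) \<longleftrightarrow> pm_ring R))
       \<and> (\<forall>M :: ('a, 'm) module. module R M \<longrightarrow> (pm_ring (triv_ext R M) \<longleftrightarrow> pm_ring R))"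
proof (intro conjI impI allI)
  interpret f: ring_hom_cring R S f
    by (intro ring_hom_cring.intro ring_hom_cring_axioms.intro assms)
  assume "ideal J S \<and> J \<noteq> {\<zero>\<^bsub>S\<^esub>} \<and> J \<noteq> carrier S \<and> J \<subseteq> Jac S"
  \<comment> \<open>only \<open>ideal J S\<close> and \<open>J \<subseteq> Jac S\<close> are needed\<close>
  then show "pm_ring (amalg R S f J) \<longleftrightarrow> pm_ring R"
    using unit_lifting_retraction.pm_ring_iff[OF f.unit_lifting_retraction_amalg] by blast
next
  fix M :: "('a, 'm) module"
  assume "module R M"
  then show "pm_ring (triv_ext R M) \<longleftrightarrow> pm_ring R"
    using unit_lifting_retraction.pm_ring_iff[OF unit_lifting_retraction_triv_ext] by blast
qed

end
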